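(* Let $f$ be a harmonic function on $K$, let $[v,w]$ be any edge of any graph $G_m$ (in particular $[p_1,p_2]$), and let $g(t)=f(v+t(w-v))$, $t\in[0,1]$. Then $g$ is differentiable at $t=\frac13$ and $g'(\frac13)=0$. In particular, for the edge $[p_1,p_2]\cong[0,1]$, $(f|_{[0,1]})'(\frac13)=0$.
   Context: Let $p_0,p_1,p_2$ be the vertices of a unit equilateral triangle in $\mathbb{R}^2$, $F_i(x)=(x+p_i)/2$, and $K$ the Sierpinski gasket (the attractor of $F_0,F_1,F_2$). For words $w$ of length $m$, $F_w=F_{w_1}\circ\cdots\circ F_{w_m}$; the minimal triangles of the graph $G_m$ are the triangles with vertices $F_w(p_0),F_w(p_1),F_w(p_2)$, and the edges of $G_m$ are their sides (segments of length $2^{-m}$ contained in $K$). A continuous $f:K\to\mathbb{R}$ is harmonic if for every $m\ge0$ and every minimal triangle of $G_m$ with vertices $v_i,v_j,v_k$, the value at the midpoint $v_{ij}$ of $[v_i,v_j]$ is $\frac15(2f(v_i)+2f(v_j)+f(v_k))$. The edge $[p_1,p_2]$ is identified with $[0,1]$ via $t\mapsto p_1+t(p_2-p_1)$. *)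

theory Defs
  imports "HOL-Analysis.Analysis"
begin

text \<open>The vertices p 0, p 1, p 2 of the triangle are a parameter p :: nat => real^2.
  Contraction F_i(x) = (x + p_i)/2.\<close>
definition sgF :: "(nat \<Rightarrow> real^2) \<Rightarrow> nat \<Rightarrow> real^2 \<Rightarrow> real^2" where
  "sgF p i x = (1/2) *\<^sub>R (x + p i)"

definition sgFw :: "(nat \<Rightarrow> real^2) \<Rightarrow> nat list \<Rightarrow> real^2 \<Rightarrow> real^2" where
  "sgFw p ws = foldr (\<lambda>i g. sgF p i \<circ> g) ws id"

definition sg_words :: "nat \<Rightarrow> nat list set" where
  "sg_words m = {ws. length ws = m \<and> set ws \<subseteq> {..<3}}"

definition sg_K :: "(nat \<Rightarrow> real^2) \<Rightarrow> (real^2) set" where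
  "sg_K p = (THE K. compact K \<and> K \<noteq> {} \<and> K = (\<Union>i<3. sgF p i ` K))"

definition sg_harmonic :: "(nat \<Rightarrow> real^2) \<Rightarrow> (real^2 \<Rightarrow> real) \<Rightarrow> bool" where
  "sg_harmonic p f \<longleftrightarrow>
     continuous_on (sg_K p) f \<and>
     (\<forall>m. \<forall>ws\<in>sg_words m. \<forall>i<3. \<forall>j<3. \<forall>k<3. i \<noteq> j \<and> j \<noteq> k \<and> i \<noteq> k \<longrightarrow>
        f (midpoint (sgFw p ws (p i)) (sgFw p ws (p j))) =
          (2 * f (sgFw p ws (p i)) + 2 * f (sgFw p ws (p j)) + f (sgFw p ws (p k))) / 5)"

end

theory Submission
  imports Defs
begin

(* A harmonic function obeys a maximum principle on edges: by the 2-2-1/5 rule the values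
   of f at the dyadic points of the edge [v_i, v_j] of a cell lie between the minimum and
   the maximum of f at the three vertices of the cell, and since the gasket is the closure
   of the vertex set (f is only known to be continuous there) so do all values on the edge.
   The parameter 1/3 is the fixed point of t \<mapsto> (1 + t)/4, the map carrying the edge of
   the cell F_u into the edge of its subcell F_(u i j); this passage shrinks the oscillation
   of f at the vertices by the factor 6/25 < 1/4.  Hence |g t - g (1/3)| = O((6/25)^n)
   whenever |t - 1/3| \<le> 4^-n/3, which forces g'(1/3) = 0. *)

section \<open>Geometric decay of increments forces a vanishing derivative\<close>

lemma exists_geometric_scale:
  fixes c r \<rho> :: real
  assumes "1 < c" and "0 < \<rho>" and "\<rho> \<le> r"
  shows "\<exists>n. r / c ^ Suc n < \<rho> \<and> \<rho> \<le> r / c ^ n"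
proof -
  obtain n where "r / \<rho> < c ^ n"
    using real_arch_pow[OF assms(1)] by blast
  then have "r / c ^ n < \<rho>"
    using assms(1,2) by (simp add: divide_less_eq mult.commute)
  then have below: "\<exists>n. r / c ^ n < \<rho>" ..
  define n0 where "n0 = (LEAST n. r / c ^ n < \<rho>)"
  have least: "r / c ^ n0 < \<rho>"
    unfolding n0_def by (rule LeastI_ex[OF below])
  then have "n0 \<noteq> 0"
    using assms(3) by (cases n0) auto
  then obtain n where n: "n0 = Suc n"
    using not0_implies_Suc by blast
  then have "\<rho> \<le> r / c ^ n"
    using not_less_Least[of n "\<lambda>n. r / c ^ n < \<rho>"] by (simp add: n0_def)
  then show ?thesis
    using least n by auto
qed

lemma geometric_bound_imp_slope_bound:
  fixes g :: "real \<Rightarrow> real"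
  assumes "0 < r" and "1 < c" and "0 \<le> q" and "q * c \<le> 1"
    and bound: "\<And>n t. \<bar>t - a\<bar> \<le> r / c ^ n \<Longrightarrow> \<bar>g t - g a\<bar> \<le> M * q ^ n"
    and t: "\<bar>t - a\<bar> \<le> r / c ^ N"
  shows "\<bar>g t - g a\<bar> \<le> M * c / r * (q * c) ^ N * \<bar>t - a\<bar>"
proof (cases "t = a")
  case False
  have "0 \<le> M"
    using bound[of a 0] assms(1) by simp
  have "r / c ^ N \<le> r"
    using assms(1,2) by (simp add: divide_le_eq one_le_power)
  then obtain n where n: "r / c ^ Suc n < \<bar>t - a\<bar>" "\<bar>t - a\<bar> \<le> r / c ^ n"
    using exists_geometric_scale[OF assms(2), of "\<bar>t - a\<bar>" r] t False by auto
  have "N \<le> n"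
  proof (rule ccontr)
    assume "\<not> N \<le> n"
    then have "r / c ^ N \<le> r / c ^ Suc n"
      using assms(1,2) by (intro divide_left_mono power_increasing) auto
    then show False
      using n(1) t by linarith
  qed
  have "\<bar>g t - g a\<bar> \<le> M * q ^ n"
    using bound[OF n(2)] .
  also have "\<dots> = M * c / r * (q * c) ^ n * (r / c ^ Suc n)"
    using assms(1,2) by (simp add: power_mult_distrib field_simps)
  also have "\<dots> \<le> M * c / r * (q * c) ^ N * \<bar>t - a\<bar>"
    using \<open>0 \<le> M\<close> \<open>N \<le> n\<close> n(1) assms
    by (intro mult_mono mult_left_mono power_decreasing) auto
  finally show ?thesis .
qed simp

lemma has_real_derivative_zero_if_geometric_bound:
  fixes g :: "real \<Rightarrow> real"
  assumes "0 < r" and "1 < c" and "0 \<le> q" and "q * c < 1"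
    and bound: "\<And>n t. \<bar>t - a\<bar> \<le> r / c ^ n \<Longrightarrow> \<bar>g t - g a\<bar> \<le> M * q ^ n"
  shows "(g has_real_derivative 0) (at a)"
proof -
  define L where "L = M * c / r"
  have "((\<lambda>t. (g t - g a) / (t - a)) \<longlongrightarrow> 0) (at a)"
  proof (rule tendstoI)
    fix \<epsilon> :: real
    assume "0 < \<epsilon>"
    have "(\<lambda>N. L * (q * c) ^ N) \<longlonglongrightarrow> 0"
      using assms(2-4) by (intro tendsto_mult_right_zero LIMSEQ_realpow_zero) auto
    then obtain N where N: "L * (q * c) ^ N < \<epsilon>"
      using \<open>0 < \<epsilon>\<close> by (metis eventually_sequentially order_tendstoD(2) order_refl)
    have "\<bar>(g t - g a) / (t - a)\<bar> < \<epsilon>" if "t \<noteq> a" "\<bar>t - a\<bar> < r / c ^ N" for t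
    proof -
      have "\<bar>g t - g a\<bar> \<le> L * (q * c) ^ N * \<bar>t - a\<bar>"
        unfolding L_def using geometric_bound_imp_slope_bound[where g = g and M = M, OF assms(1-3) _ bound] assms(4) that(2) by simp
      also have "\<dots> < \<epsilon> * \<bar>t - a\<bar>"
        using N that(1) by simp
      finally show ?thesis
        using that(1) by (simp add: abs_divide divide_less_eq)
    qed
    moreover have "0 < r / c ^ N"
      using assms(1,2) by simp
    ultimately show "\<forall>\<^sub>F t in at a. dist ((g t - g a) / (t - a)) 0 < \<epsilon>"
      unfolding eventually_at dist_real_def by auto
  qed
  then show ?thesis
    by (simp add: has_field_derivative_iff)
qed

lemma sgFw_Nil [simp]: "sgFw p [] = id"
  by (simp add: sgFw_def)

lemma sgFw_Cons [simp]: "sgFw p (a # u) x = sgF p a (sgFw p u x)"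
  by (simp add: sgFw_def)

lemma sgFw_append [simp]: "sgFw p (u @ u') x = sgFw p u (sgFw p u' x)"
  by (induction u) auto

lemma sgFw_affine:
  "sgFw p u (x + t *\<^sub>R (y - x)) = sgFw p u x + t *\<^sub>R (sgFw p u y - sgFw p u x)"
proof (induction u)
  case (Cons a u)
  show ?case
    by (simp only: sgFw_Cons Cons.IH) (simp add: sgF_def algebra_simps)
qed simp

lemma sgFw_midpoint: "sgFw p u (midpoint x y) = midpoint (sgFw p u x) (sgFw p u y)"
proof -
  have "midpoint x y = x + (1/2) *\<^sub>R (y - x)" for x y :: "real^2"
    by (simp add: midpoint_def vec_eq_iff field_simps)
  then show ?thesis
    by (simp only: sgFw_affine)
qed

lemma sgF_vertex: "sgF p a (p b) = midpoint (p a) (p b)"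
  by (simp add: sgF_def midpoint_def add.commute)

lemma sgF_fixpoint_iff: "sgF p a x = x \<longleftrightarrow> x = p a"
  by (auto simp: sgF_def vec_eq_iff field_simps)

lemma sgF_vertex_self [simp]: "sgF p a (p a) = p a"
  by (simp add: sgF_fixpoint_iff)

lemma dist_sgF: "dist (sgF p a x) (sgF p a y) = dist x y / 2"
proof -
  have "sgF p a x - sgF p a y = (1/2) *\<^sub>R (x - y)"
    by (simp add: sgF_def algebra_simps)
  then show ?thesis
    by (simp add: dist_norm)
qed

lemma dist_sgFw: "dist (sgFw p u x) (sgFw p u y) = dist x y / 2 ^ length u"
  by (induction u) (auto simp: dist_sgF)

lemma continuous_on_sgF: "continuous_on A (sgF p a)"
  unfolding sgF_def by (intro continuous_intros)

section \<open>The gasket as the closure of its vertex set\<close>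

definition sg_vertices :: "(nat \<Rightarrow> real^2) \<Rightarrow> (real^2) set" where
  "sg_vertices p = {sgFw p u (p a) | u a. set u \<subseteq> {..<3} \<and> a < 3}"

lemma sgFw_vertex_in_sg_vertices:
  "set u \<subseteq> {..<3} \<Longrightarrow> a < 3 \<Longrightarrow> sgFw p u (p a) \<in> sg_vertices p"
  unfolding sg_vertices_def by blast

lemma lessThan_3_nat: "{..<3::nat} = {0, 1, 2}"
  by auto

lemma bounded_sg_vertices: "bounded (sg_vertices p)"
proof -
  define R where "R = norm (p 0) + norm (p 1) + norm (p 2)"
  have vertex_le: "norm (p a) \<le> R" if "a < 3" for a
  proof -
    have "a = 0 \<or> a = 1 \<or> a = 2"
      using that by auto
    then show ?thesis
      unfolding R_def by auto
  qed
  have "norm (sgFw p u (p a)) \<le> R" if "set u \<subseteq> {..<3}" "a < 3" for u a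
    using that
  proof (induction u)
    case (Cons b u)
    then have "norm (sgFw p u (p a)) \<le> R" "norm (p b) \<le> R"
      using vertex_le by auto
    moreover have "norm (sgF p b (sgFw p u (p a))) \<le> (norm (sgFw p u (p a)) + norm (p b)) / 2"
      unfolding sgF_def using norm_triangle_ineq[of "sgFw p u (p a)" "p b"] by simp
    ultimately show ?case
      by simp
  qed (simp add: vertex_le)
  then have "\<forall>y\<in>sg_vertices p. norm y \<le> R"
    unfolding sg_vertices_def by blast
  then show ?thesis
    unfolding bounded_iff by blast
qed

lemma sg_vertices_self_similar: "(\<Union>a<3. sgF p a ` sg_vertices p) = sg_vertices p"
proof (intro equalityI subsetI)
  fix y assume "y \<in> (\<Union>a<3. sgF p a ` sg_vertices p)"
  then obtain a u b where "a < 3" "set u \<subseteq> {..<3}" "b < 3" "y = sgF p a (sgFw p u (p b))"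
    unfolding sg_vertices_def by auto
  then show "y \<in> sg_vertices p"
    unfolding sg_vertices_def by (auto intro!: exI[of _ "a # u"])
next
  fix y assume "y \<in> sg_vertices p"
  then obtain u b where u: "set u \<subseteq> {..<3}" "b < 3" "y = sgFw p u (p b)"
    unfolding sg_vertices_def by auto
  show "y \<in> (\<Union>a<3. sgF p a ` sg_vertices p)"
  proof (cases u)
    case Nil
    have "p b \<in> sg_vertices p"
      using sgFw_vertex_in_sg_vertices[of "[]" b p] u by simp
    then have "p b \<in> sgF p b ` sg_vertices p"
      by (metis image_eqI sgF_vertex_self)
    then show ?thesis
      using u Nil by auto
  next
    case (Cons a u')
    then have "sgFw p u' (p b) \<in> sg_vertices p"
      using u by (simp add: sgFw_vertex_in_sg_vertices)
    then show ?thesis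
      using u Cons by auto
  qed
qed

lemma closure_continuous_image_bounded:
  fixes f :: "'a::heine_borel \<Rightarrow> 'b::metric_space"
  assumes "continuous_on (closure A) f" and "bounded A"
  shows "f ` closure A = closure (f ` A)"
proof
  show "f ` closure A \<subseteq> closure (f ` A)"
    using assms(1) by (rule image_closure_subset) (auto intro: closure_subset[THEN subsetD])
  have "closed (f ` closure A)"
    using assms by (intro compact_imp_closed compact_continuous_image) (auto simp: compact_closure)
  then show "closure (f ` A) \<subseteq> f ` closure A"
    by (rule closure_minimal[rotated]) (use closure_subset in blast)
qed

lemma closure_sg_vertices_attractor:
  "compact (closure (sg_vertices p)) \<and> closure (sg_vertices p) \<noteq> {} \<and>
   closure (sg_vertices p) = (\<Union>a<3. sgF p a ` closure (sg_vertices p))"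
proof (intro conjI)
  show "compact (closure (sg_vertices p))"
    using bounded_sg_vertices by (simp add: compact_closure)
  have "p 0 \<in> sg_vertices p"
    using sgFw_vertex_in_sg_vertices[of "[]" 0 p] by simp
  then show "closure (sg_vertices p) \<noteq> {}"
    using closure_subset by blast
  have "(\<Union>a<3. sgF p a ` closure (sg_vertices p)) = (\<Union>a<3. closure (sgF p a ` sg_vertices p))"
    using closure_continuous_image_bounded[OF continuous_on_sgF bounded_sg_vertices] by simp
  also have "\<dots> = closure (\<Union>a<3. sgF p a ` sg_vertices p)"
    by (simp add: lessThan_3_nat closure_Un)
  finally show "closure (sg_vertices p) = (\<Union>a<3. sgF p a ` closure (sg_vertices p))"
    by (simp add: sg_vertices_self_similar)
qed

lemma self_similar_set_cell_decomposition:
  assumes K: "K = (\<Union>a<3. sgF p a ` K)" and "x \<in> K"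
  shows "\<exists>u y. set u \<subseteq> {..<3} \<and> length u = n \<and> y \<in> K \<and> x = sgFw p u y"
proof (induction n)
  case 0
  show ?case
    using \<open>x \<in> K\<close> by (auto intro!: exI[of _ "[]"])
next
  case (Suc n)
  then obtain u y where uy: "set u \<subseteq> {..<3}" "length u = n" "y \<in> K" "x = sgFw p u y"
    by blast
  then obtain a z where "a < 3" "z \<in> K" "y = sgF p a z"
    using K by blast
  then show ?case
    using uy by (intro exI[of _ "u @ [a]"] exI[of _ z]) auto
qed

lemma self_similar_compact_contains_vertices:
  assumes K: "compact K" "K \<noteq> {}" "K = (\<Union>a<3. sgF p a ` K)"
  shows "sg_vertices p \<subseteq> K"
proof -
  have invariant: "sgF p a ` K \<subseteq> K" if "a < 3" for a
    using that K(3) by blast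
  have vertex_in: "p a \<in> K" if a: "a < 3" for a
  proof -
    obtain z where "z \<in> K" "sgF p a z = z"
      using Banach_fix[OF compact_imp_complete[OF K(1)] K(2), of "1/2" "sgF p a"]
        invariant[OF a] dist_sgF by auto
    then show ?thesis
      by (simp add: sgF_fixpoint_iff)
  qed
  have "sgFw p u (p a) \<in> K" if "set u \<subseteq> {..<3}" "a < 3" for u a
    using that by (induction u) (use vertex_in invariant in auto)
  then show ?thesis
    unfolding sg_vertices_def by blast
qed

lemma self_similar_bounded_subset_closure_vertices:
  assumes K: "bounded K" "K = (\<Union>a<3. sgF p a ` K)"
  shows "K \<subseteq> closure (sg_vertices p)"
proof (intro subsetI iffD2[OF closure_approachable] allI impI)
  fix x and e :: real
  assume "x \<in> K" "e > 0"
  obtain R0 where R0: "\<forall>y\<in>K. dist (p 0) y \<le> R0"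
    using bounded_any_center K(1) by blast
  define R where "R = \<bar>R0\<bar> + 1"
  have R: "R > 0" "\<And>y. y \<in> K \<Longrightarrow> dist (p 0) y \<le> R"
    unfolding R_def using R0 by force+
  obtain n where n: "(1/2::real) ^ n < e / R"
    using real_arch_pow_inv[of "e / R" "1/2"] \<open>e > 0\<close> R(1) by auto
  obtain u y where uy: "set u \<subseteq> {..<3}" "length u = n" "y \<in> K" "x = sgFw p u y"
    using self_similar_set_cell_decomposition[OF K(2) \<open>x \<in> K\<close>] by blast
  have vertex: "sgFw p u (p 0) \<in> sg_vertices p"
    using uy(1) by (simp add: sgFw_vertex_in_sg_vertices)
  have "dist (sgFw p u (p 0)) x = dist (p 0) y / 2 ^ n"
    using uy by (simp add: dist_sgFw)
  also have "\<dots> \<le> R * (1/2) ^ n"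
    using R(2)[OF uy(3)] by (simp add: power_one_over divide_right_mono)
  also have "\<dots> < e"
    using n R(1) by (simp add: pos_less_divide_eq mult.commute)
  finally show "\<exists>y\<in>sg_vertices p. dist y x < e"
    using vertex by blast
qed

lemma sg_attractor_unique:
  assumes "compact K" "K \<noteq> {}" "K = (\<Union>a<3. sgF p a ` K)"
  shows "K = closure (sg_vertices p)"
proof
  show "closure (sg_vertices p) \<subseteq> K"
    using self_similar_compact_contains_vertices[OF assms] compact_imp_closed[OF assms(1)]
    by (rule closure_minimal)
  show "K \<subseteq> closure (sg_vertices p)"
    using compact_imp_bounded[OF assms(1)] assms(3) by (rule self_similar_bounded_subset_closure_vertices)
qed

lemma sg_K_eq_closure_vertices: "sg_K p = closure (sg_vertices p)"
  unfolding sg_K_def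
  using closure_sg_vertices_attractor sg_attractor_unique by (intro the_equality) blast+

lemma sg_K_closed: "closed (sg_K p)"
  by (simp add: sg_K_eq_closure_vertices)

lemma sgFw_vertex_in_sg_K: "set u \<subseteq> {..<3} \<Longrightarrow> a < 3 \<Longrightarrow> sgFw p u (p a) \<in> sg_K p"
  unfolding sg_K_eq_closure_vertices by (rule closure_subset[THEN subsetD, OF sgFw_vertex_in_sg_vertices])

section \<open>Harmonic functions along an edge\<close>

lemma sg_harmonic_continuous_on: "sg_harmonic p f \<Longrightarrow> continuous_on (sg_K p) f"
  by (simp add: sg_harmonic_def)

lemma sg_harmonic_subcell_vertex:
  assumes "sg_harmonic p f" and "set u \<subseteq> {..<3}"
    and "a < 3" "b < 3" "c < 3" "a \<noteq> b" "b \<noteq> c" "a \<noteq> c"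
  shows "f (sgFw p (u @ [a]) (p b)) =
    (2 * f (sgFw p u (p a)) + 2 * f (sgFw p u (p b)) + f (sgFw p u (p c))) / 5"
proof -
  have "sgFw p (u @ [a]) (p b) = midpoint (sgFw p u (p a)) (sgFw p u (p b))"
    by (simp add: sgF_vertex sgFw_midpoint)
  moreover have "u \<in> sg_words (length u)"
    using assms(2) by (simp add: sg_words_def)
  ultimately show ?thesis
    using assms unfolding sg_harmonic_def by presburger
qed

locale sg_edge =
  fixes p :: "nat \<Rightarrow> real^2" and f :: "real^2 \<Rightarrow> real" and i j k :: nat
  assumes harmonic: "sg_harmonic p f"
    and vertex_indices: "i < 3" "j < 3" "k < 3" "i \<noteq> j" "j \<noteq> k" "i \<noteq> k"
begin

definition base_edge :: "real \<Rightarrow> real^2" where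
  "base_edge t = p i + t *\<^sub>R (p j - p i)"

definition edge :: "nat list \<Rightarrow> real \<Rightarrow> real^2" where
  "edge u t = sgFw p u (base_edge t)"

definition vertex_value :: "nat \<Rightarrow> nat list \<Rightarrow> real" where
  "vertex_value a u = f (sgFw p u (p a))"

definition lo :: "nat list \<Rightarrow> real" where
  "lo u = min (vertex_value i u) (min (vertex_value j u) (vertex_value k u))"

definition hi :: "nat list \<Rightarrow> real" where
  "hi u = max (vertex_value i u) (max (vertex_value j u) (vertex_value k u))"

definition osc :: "nat list \<Rightarrow> real" where
  "osc u = max \<bar>vertex_value j u - vertex_value i u\<bar> \<bar>vertex_value k u - vertex_value i u\<bar>"

lemma edge_eq: "edge u t = sgFw p u (p i) + t *\<^sub>R (sgFw p u (p j) - sgFw p u (p i))"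
  by (simp add: edge_def base_edge_def sgFw_affine)

lemma continuous_on_edge: "continuous_on A (edge u)"
  unfolding edge_eq by (intro continuous_intros)

lemma edge_append_i: "edge (u @ [i]) t = edge u (t / 2)"
proof -
  have "sgF p i (base_edge t) = base_edge (t / 2)"
    by (simp add: sgF_def base_edge_def vec_eq_iff field_simps)
  then show ?thesis
    by (simp add: edge_def)
qed

lemma edge_append_j: "edge (u @ [j]) t = edge u ((1 + t) / 2)"
proof -
  have "sgF p j (base_edge t) = base_edge ((1 + t) / 2)"
    by (simp add: sgF_def base_edge_def vec_eq_iff field_simps)
  then show ?thesis
    by (simp add: edge_def)
qed

lemma vertex_value_append_i:
  assumes "set u \<subseteq> {..<3}"
  shows "vertex_value i (u @ [i]) = vertex_value i u"
    and "vertex_value j (u @ [i]) = (2 * vertex_value i u + 2 * vertex_value j u + vertex_value k u) / 5"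
    and "vertex_value k (u @ [i]) = (2 * vertex_value i u + 2 * vertex_value k u + vertex_value j u) / 5"
  using sg_harmonic_subcell_vertex[OF harmonic assms, of i j k]
    sg_harmonic_subcell_vertex[OF harmonic assms, of i k j] vertex_indices
  by (auto simp: vertex_value_def)

lemma vertex_value_append_j:
  assumes "set u \<subseteq> {..<3}"
  shows "vertex_value j (u @ [j]) = vertex_value j u"
    and "vertex_value i (u @ [j]) = (2 * vertex_value j u + 2 * vertex_value i u + vertex_value k u) / 5"
    and "vertex_value k (u @ [j]) = (2 * vertex_value j u + 2 * vertex_value k u + vertex_value i u) / 5"
  using sg_harmonic_subcell_vertex[OF harmonic assms, of j i k]
    sg_harmonic_subcell_vertex[OF harmonic assms, of j k i] vertex_indices
  by (auto simp: vertex_value_def)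

lemma value_range_append:
  assumes "set u \<subseteq> {..<3}" and "a \<in> {i, j}"
  shows "lo u \<le> lo (u @ [a])" and "hi (u @ [a]) \<le> hi u"
  using assms(2) by (auto simp: lo_def hi_def vertex_value_append_i[OF assms(1)] vertex_value_append_j[OF assms(1)])

lemma maximum_principle_edge_dyadic:
  assumes "set u \<subseteq> {..<3}" and "m \<le> 2 ^ n"
  shows "edge u (real m / 2 ^ n) \<in> sg_K p \<inter> f -` {lo u..hi u}"
  using assms
proof (induction n arbitrary: u m)
  case 0
  then have "m = 0 \<or> m = 1"
    by auto
  moreover have "edge u 0 = sgFw p u (p i)" "edge u 1 = sgFw p u (p j)"
    by (simp_all add: edge_eq)
  ultimately show ?case
    using sgFw_vertex_in_sg_K[OF "0.prems"(1)] vertex_indices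
    by (auto simp: lo_def hi_def vertex_value_def)
next
  case (Suc n)
  show ?case
  proof (cases "m \<le> 2 ^ n")
    case True
    have "edge u (real m / 2 ^ Suc n) = edge (u @ [i]) (real m / 2 ^ n)"
      by (simp add: edge_append_i mult.commute)
    moreover have "edge (u @ [i]) (real m / 2 ^ n) \<in> sg_K p \<inter> f -` {lo (u @ [i])..hi (u @ [i])}"
      by (rule Suc.IH) (use Suc.prems vertex_indices True in auto)
    ultimately show ?thesis
      using value_range_append[OF Suc.prems(1), of i] by (auto intro: order_trans)
  next
    case False
    then have "m - 2 ^ n \<le> 2 ^ n" and m: "real m = real (m - 2 ^ n) + 2 ^ n"
      using Suc.prems(2) by auto
    have "edge u (real m / 2 ^ Suc n) = edge (u @ [j]) (real (m - 2 ^ n) / 2 ^ n)"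
      unfolding edge_append_j m by (simp add: field_simps)
    moreover have "edge (u @ [j]) (real (m - 2 ^ n) / 2 ^ n) \<in> sg_K p \<inter> f -` {lo (u @ [j])..hi (u @ [j])}"
      by (rule Suc.IH) (use Suc.prems vertex_indices \<open>m - 2 ^ n \<le> 2 ^ n\<close> in auto)
    ultimately show ?thesis
      using value_range_append[OF Suc.prems(1), of j] by (auto intro: order_trans)
  qed
qed

lemma maximum_principle_edge:
  assumes "set u \<subseteq> {..<3}" and "t \<in> {0..1}"
  shows "edge u t \<in> sg_K p \<inter> f -` {lo u..hi u}"
proof -
  let ?dyadics = "{0..1::real} \<inter> (\<Union>n m. {real m / 2 ^ n})"
  have "closure ?dyadics = {0..1}"
    by (subst closure_dyadic_rationals_in_convex_set_pos_1) auto
  moreover have "edge u ` ?dyadics \<subseteq> sg_K p \<inter> f -` {lo u..hi u}"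
  proof clarify
    fix n m
    assume "real m / 2 ^ n \<in> {0..1::real}"
    then have "m \<le> 2 ^ n"
      by (simp add: divide_le_eq_1)
    then show "edge u (real m / 2 ^ n) \<in> sg_K p \<inter> f -` {lo u..hi u}"
      by (rule maximum_principle_edge_dyadic[OF assms(1)])
  qed
  then have "edge u ` closure ?dyadics \<subseteq> sg_K p \<inter> f -` {lo u..hi u}"
    using continuous_closed_preimage[OF sg_harmonic_continuous_on[OF harmonic] sg_K_closed]
    by (intro image_closure_subset continuous_on_edge) auto
  ultimately show ?thesis
    using assms(2) by blast
qed

lemma hi_minus_lo_le_osc: "hi u - lo u \<le> 2 * osc u"
  unfolding hi_def lo_def osc_def by (auto simp: abs_if max_def min_def)

lemma osc_append_ij:
  assumes "set u \<subseteq> {..<3}"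
  shows "osc (u @ [i, j]) \<le> 6/25 * osc u"
proof -
  have ui: "set (u @ [i]) \<subseteq> {..<3}"
    using assms vertex_indices by auto
  define x where "x = vertex_value j u - vertex_value i u"
  define y where "y = vertex_value k u - vertex_value i u"
  have x: "\<bar>x\<bar> \<le> osc u" and y: "\<bar>y\<bar> \<le> osc u"
    unfolding x_def y_def osc_def by auto
  have jump_j: "vertex_value j (u @ [i, j]) - vertex_value i (u @ [i, j]) = (5 * x + y) / 25"
    and jump_k: "vertex_value k (u @ [i, j]) - vertex_value i (u @ [i, j]) = (x + 2 * y) / 25"
    using vertex_value_append_j[OF ui] vertex_value_append_i[OF assms]
    unfolding x_def y_def by (simp_all add: field_simps)
  have "\<bar>(5 * x + y) / 25\<bar> \<le> 6/25 * osc u" and "\<bar>(x + 2 * y) / 25\<bar> \<le> 6/25 * osc u"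
    using x y by (simp_all add: abs_le_iff; linarith)+
  then show ?thesis
    unfolding osc_def[of "u @ [i, j]"] jump_j jump_k by (rule max.boundedI)
qed

lemma osc_zoom:
  assumes "set u \<subseteq> {..<3}"
  shows "osc (u @ concat (replicate n [i, j])) \<le> (6/25) ^ n * osc u"
proof (induction n)
  case (Suc n)
  have "u @ concat (replicate (Suc n) [i, j]) = (u @ concat (replicate n [i, j])) @ [i, j]"
    by (simp flip: replicate_append_same)
  moreover have "set (u @ concat (replicate n [i, j])) \<subseteq> {..<3}"
    using assms vertex_indices by auto
  ultimately have "osc (u @ concat (replicate (Suc n) [i, j])) \<le> 6/25 * osc (u @ concat (replicate n [i, j]))"
    using osc_append_ij by presburger
  also have "\<dots> \<le> (6/25) ^ Suc n * osc u"
    using Suc.IH by simp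
  finally show ?case .
qed simp

lemma sgFw_zoom_base_edge:
  "sgFw p (concat (replicate n [i, j])) (base_edge s) = base_edge (1/3 + (s - 1/3) / 4 ^ n)"
proof (induction n)
  case (Suc n)
  have "sgF p i (sgF p j (base_edge t)) = base_edge ((1 + t) / 4)" for t
    by (simp add: sgF_def base_edge_def vec_eq_iff field_simps)
  then show ?case
    using Suc.IH by (simp add: field_simps)
qed simp

lemma edge_zoom: "edge (u @ concat (replicate n [i, j])) s = edge u (1/3 + (s - 1/3) / 4 ^ n)"
  by (simp add: edge_def sgFw_zoom_base_edge)

lemma edge_value_near_third:
  assumes u: "set u \<subseteq> {..<3}" and t: "\<bar>t - 1/3\<bar> \<le> (1/3) / 4 ^ n"
  shows "\<bar>f (edge u t) - f (edge u (1/3))\<bar> \<le> 2 * osc u * (6/25) ^ n"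
proof -
  define w where "w = u @ concat (replicate n [i, j])"
  define s where "s = 1/3 + 4 ^ n * (t - 1/3)"
  have "\<bar>s - 1/3\<bar> = 4 ^ n * \<bar>t - 1/3\<bar>"
    by (simp add: s_def abs_mult)
  also have "\<dots> \<le> 4 ^ n * ((1/3) / 4 ^ n)"
    using t by (intro mult_left_mono) auto
  finally have "s \<in> {0..1}"
    by (auto simp: abs_if split: if_split_asm)
  moreover have "edge w s = edge u t" and "edge w (1/3) = edge u (1/3)"
    by (simp_all add: w_def s_def edge_zoom)
  moreover have w: "set w \<subseteq> {..<3}"
    using u vertex_indices by (auto simp: w_def)
  ultimately have "f (edge u t) \<in> {lo w..hi w}" and "f (edge u (1/3)) \<in> {lo w..hi w}"
    using maximum_principle_edge[OF w, of s] maximum_principle_edge[OF w, of "1/3"] by auto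
  then have "\<bar>f (edge u t) - f (edge u (1/3))\<bar> \<le> hi w - lo w"
    by auto
  also have "\<dots> \<le> 2 * osc w"
    by (rule hi_minus_lo_le_osc)
  also have "\<dots> \<le> 2 * osc u * (6/25) ^ n"
    using osc_zoom[OF u, of n] by (simp add: w_def mult.commute)
  finally show ?thesis .
qed

lemma edge_has_real_derivative_zero_at_third:
  assumes "set u \<subseteq> {..<3}"
  shows "((\<lambda>t. f (edge u t)) has_real_derivative 0) (at (1/3))"
proof (rule has_real_derivative_zero_if_geometric_bound[where r = "1/3" and c = 4 and q = "6/25"])
  show "\<bar>f (edge u t) - f (edge u (1/3))\<bar> \<le> 2 * osc u * (6/25) ^ n"
    if "\<bar>t - 1/3\<bar> \<le> (1/3) / 4 ^ n" for n t
    using edge_value_near_third[OF assms that] .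
qed simp_all

end

theorem theorem6:
  fixes p :: "nat \<Rightarrow> real^2" and f :: "real^2 \<Rightarrow> real"
    and ws :: "nat list" and m i j :: nat and v w :: "real^2"
  assumes "\<forall>a<3. \<forall>b<3. a \<noteq> b \<longrightarrow> dist (p a) (p b) = 1"
    and "sg_harmonic p f"
    and "ws \<in> sg_words m" and "i < 3" and "j < 3" and "i \<noteq> j"
    and "v = sgFw p ws (p i)" and "w = sgFw p ws (p j)"
  shows "((\<lambda>t. f (v + t *\<^sub>R (w - v))) has_real_derivative 0) (at (1/3) within {0..1})"
proof -
  define k where "k = 3 - i - j"
  have "k < 3" "j \<noteq> k" "i \<noteq> k"
    using assms(4-6) unfolding k_def by presburger+
  then interpret sg_edge p f i j k
    using assms(2,4-6) by unfold_locales
  have "set ws \<subseteq> {..<3}"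
    using assms(3) by (simp add: sg_words_def)
  moreover have "(\<lambda>t. f (v + t *\<^sub>R (w - v))) = (\<lambda>t. f (edge ws t))"
    by (simp add: edge_eq assms(7,8))
  ultimately show ?thesis
    using edge_has_real_derivative_zero_at_third has_field_derivative_at_within by metis
qed

end
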